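(* Let $f$ be an L-additive arithmetic function whose associated completely multiplicative function $h_f$ is nonzero-valued, and let $\Lambda_f$ be its generalized von Mangoldt function. Then for every positive integer $n$, $$(\tau\ast\Lambda_f)(n)=\frac{f(n)\tau(n)}{2h_f(n)}.$$
   Context: An arithmetic function $f:\mathbb{N}\to\mathbb{C}$ is L-additive if there is a completely multiplicative function $h_f$ such that $f(mn)=f(m)h_f(n)+f(n)h_f(m)$ for all positive integers $m,n$; such an $h_f$ is fixed. $\Lambda_f(n)=\frac{f(p)}{h_f(p)}$ if $n=p^k$ for some prime $p$ and integer $k\geq1$, and $0$ otherwise. $\tau(n)$ is the number of positive divisors of $n$, and $\ast$ is Dirichlet convolution. *)

theory Defs
  imports Complex_Main "HOL-Number_Theory.Number_Theory"
begin

definition completely_multiplicative :: "(nat \<Rightarrow> complex) \<Rightarrow> bool" where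
  "completely_multiplicative h \<longleftrightarrow>
     h 1 = 1 \<and> (\<forall>m n. m > 0 \<longrightarrow> n > 0 \<longrightarrow> h (m * n) = h m * h n)"

definition L_additive_wrt :: "(nat \<Rightarrow> complex) \<Rightarrow> (nat \<Rightarrow> complex) \<Rightarrow> bool" where
  "L_additive_wrt f h \<longleftrightarrow> completely_multiplicative h \<and>
     (\<forall>m n. m > 0 \<longrightarrow> n > 0 \<longrightarrow> f (m * n) = f m * h n + f n * h m)"

definition gen_mangoldt :: "(nat \<Rightarrow> complex) \<Rightarrow> (nat \<Rightarrow> complex) \<Rightarrow> nat \<Rightarrow> complex" where
  "gen_mangoldt f h n =
     (if primepow n then f (aprimedivisor n) / h (aprimedivisor n) else 0)"

definition num_divisors :: "nat \<Rightarrow> nat" where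
  "num_divisors n = card {d. d dvd n}"

definition dirichlet_conv :: "(nat \<Rightarrow> complex) \<Rightarrow> (nat \<Rightarrow> complex) \<Rightarrow> nat \<Rightarrow> complex" where
  "dirichlet_conv a b n = (\<Sum>d | d dvd n. a d * b (n div d))"

end

theory Submission
  imports Defs
begin

text \<open>
  The quotient \<open>g = f / h\<^sub>f\<close> is completely additive, and \<open>\<Lambda>\<^sub>f (p\<^sup>k) = g p\<close>; summing over
  the prime factorisation gives \<open>1 * \<Lambda>\<^sub>f = g\<close>.  Since \<open>\<tau> = 1 * 1\<close>, this yields
  \<open>\<tau> * \<Lambda>\<^sub>f = 1 * g\<close>, and pairing each divisor \<open>d\<close> of \<open>n\<close> with \<open>n / d\<close> shows
  \<open>2 (1 * g)(n) = \<tau>(n) g(n)\<close>.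
\<close>

lemma L_additive_div_add:
  assumes "L_additive_wrt f h" and "\<forall>m>0. h m \<noteq> 0" and "a > 0" and "b > 0"
  shows "f (a * b) / h (a * b) = f a / h a + f b / h b"
proof -
  have "f (a * b) = f a * h b + f b * h a" and "h (a * b) = h a * h b"
    using assms(1,3,4) unfolding L_additive_wrt_def completely_multiplicative_def by auto
  with assms(2-4) show ?thesis by (simp add: field_simps)
qed

lemma additive_prod_mset:
  fixes g :: "nat \<Rightarrow> 'a :: cancel_comm_monoid_add"
  assumes add: "\<And>a b. a > 0 \<Longrightarrow> b > 0 \<Longrightarrow> g (a * b) = g a + g b"
    and pos: "\<forall>x\<in>#M. x > 0"
  shows "g (prod_mset M) = (\<Sum>x\<in>#M. g x)"
  using pos
proof (induction M)
  case empty
  have "g 1 + g 1 = g 1 + 0" using add[of 1 1] by simp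
  then show ?case by simp
next
  case (add x M)
  then have "prod_mset M > 0" by (auto intro: Nat.gr0I)
  with add show ?case by (simp add: assms(1))
qed

lemma sum_divisors_primepow_additive:
  fixes g :: "nat \<Rightarrow> 'a :: cancel_comm_monoid_add"
  assumes add: "\<And>a b. a > 0 \<Longrightarrow> b > 0 \<Longrightarrow> g (a * b) = g a + g b"
    and "m > 0"
  shows "(\<Sum>d | d dvd m. if primepow d then g (aprimedivisor d) else 0) = g m"
proof -
  have "(\<Sum>d | d dvd m. if primepow d then g (aprimedivisor d) else 0)
        = (\<Sum>q\<in>primepow_factors m. g (aprimedivisor q))"
    using \<open>m > 0\<close> by (intro sum.mono_neutral_cong_right) (auto simp: primepow_factors_def)
  also have "\<dots> = (\<Sum>p\<in>#prime_factorization m. g p)"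
    using \<open>m > 0\<close> by (intro sum_prime_factorization_conv_sum_primepow_factors) auto
  also have "\<dots> = g (prod_mset (prime_factorization m))"
    by (rule additive_prod_mset[OF add, symmetric]) (auto simp: prime_gt_0_nat in_prime_factors_iff)
  also have "prod_mset (prime_factorization m) = m"
    using \<open>m > 0\<close> by (simp add: prod_mset_prime_factorization_nat)
  finally show ?thesis .
qed

lemma sum_divisors_gen_mangoldt:
  assumes "L_additive_wrt f h" and "\<forall>m>0. h m \<noteq> 0" and "m > 0"
  shows "(\<Sum>d | d dvd m. gen_mangoldt f h d) = f m / h m"
  unfolding gen_mangoldt_def
  using sum_divisors_primepow_additive[where g = "\<lambda>m. f m / h m"]
        L_additive_div_add[OF assms(1,2)] assms(3)
  by blast

lemma sum_divisors_reflect: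
  fixes F :: "nat \<Rightarrow> 'a :: comm_monoid_add"
  assumes "n > 0"
  shows "(\<Sum>d | d dvd n. F (n div d)) = (\<Sum>d | d dvd n. F d)"
  by (rule sum.reindex_bij_witness[where i = "\<lambda>d. n div d" and j = "\<lambda>d. n div d"])
     (use assms in \<open>auto simp: div_div_eq_right elim!: dvdE\<close>)

lemma sum_divisors_additive:
  fixes g :: "nat \<Rightarrow> 'a :: comm_semiring_1"
  assumes add: "\<And>a b. a > 0 \<Longrightarrow> b > 0 \<Longrightarrow> g (a * b) = g a + g b"
    and "n > 0"
  shows "2 * (\<Sum>d | d dvd n. g d) = of_nat (num_divisors n) * g n"
proof -
  have "2 * (\<Sum>d | d dvd n. g d) = (\<Sum>d | d dvd n. g d + g (n div d))"
    using sum_divisors_reflect[OF \<open>n > 0\<close>, of g] by (simp add: sum.distrib mult_2)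
  also have "\<dots> = (\<Sum>d | d dvd n. g n)"
  proof (intro sum.cong refl)
    fix d assume "d \<in> {d. d dvd n}"
    then obtain k where "n = d * k" by auto
    with \<open>n > 0\<close> show "g d + g (n div d) = g n" by (simp add: add)
  qed
  also have "\<dots> = of_nat (num_divisors n) * g n"
    by (simp add: num_divisors_def)
  finally show ?thesis .
qed

lemma num_divisors_div_eq_card_multiples:
  assumes "d dvd n" and "n > 0"
  shows "num_divisors (n div d) = card {e. e dvd n \<and> d dvd e}"
  unfolding num_divisors_def
  by (rule bij_betw_same_card[where f = "\<lambda>c. d * c"], rule bij_betw_byWitness[where f' = "\<lambda>e. e div d"])
     (use assms in \<open>auto elim!: dvdE\<close>)

lemma dirichlet_conv_num_divisors:
  assumes "n > 0"
  shows "dirichlet_conv (\<lambda>d. of_nat (num_divisors d)) a n = (\<Sum>e | e dvd n. \<Sum>d | d dvd e. a d)"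
proof -
  let ?D = "{d. d dvd n}"
  have fin: "finite ?D" using assms by simp
  have "dirichlet_conv (\<lambda>d. of_nat (num_divisors d)) a n
        = (\<Sum>d\<in>?D. of_nat (num_divisors (n div (n div d))) * a (n div d))"
    unfolding dirichlet_conv_def using assms by (intro sum.cong refl) (auto elim!: dvdE)
  also have "\<dots> = (\<Sum>d\<in>?D. of_nat (num_divisors (n div d)) * a d)"
    by (rule sum_divisors_reflect[OF assms])
  also have "\<dots> = (\<Sum>d\<in>?D. \<Sum>e\<in>{e\<in>?D. d dvd e}. a d)"
    using assms by (intro sum.cong refl) (simp add: num_divisors_div_eq_card_multiples)
  also have "\<dots> = (\<Sum>e\<in>?D. \<Sum>d\<in>{d\<in>?D. d dvd e}. a d)"
    by (rule sum.swap_restrict[OF fin fin])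
  also have "\<dots> = (\<Sum>e | e dvd n. \<Sum>d | d dvd e. a d)"
    by (intro sum.cong refl arg_cong[where f = "\<lambda>D. sum a D"]) (auto intro: dvd_trans)
  finally show ?thesis .
qed

theorem corollary2p1:
  fixes f h :: "nat \<Rightarrow> complex" and n :: nat
  assumes "L_additive_wrt f h"
    and "\<forall>m>0. h m \<noteq> 0"
    and "n > 0"
  shows "dirichlet_conv (\<lambda>d. of_nat (num_divisors d)) (gen_mangoldt f h) n
           = f n * of_nat (num_divisors n) / (2 * h n)"
proof -
  have "dirichlet_conv (\<lambda>d. of_nat (num_divisors d)) (gen_mangoldt f h) n
        = (\<Sum>e | e dvd n. f e / h e)"
    using assms by (auto simp: dirichlet_conv_num_divisors sum_divisors_gen_mangoldt
                         intro!: sum.cong intro: Nat.gr0I)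
  also have "2 * \<dots> = of_nat (num_divisors n) * (f n / h n)"
    by (rule sum_divisors_additive[OF L_additive_div_add[OF assms(1,2)] assms(3)])
  finally show ?thesis
    using assms(2,3) by (simp add: field_simps)
qed

end
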